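(* If $(\alpha,\beta)$ is admissible and non-null, then there exists $x\in(0,1)$ such that $\pi_x(\alpha)=\pi_x(\beta)$.
   Context: $\Omega=\{0,1\}^\infty$ (infinite binary strings $\omega_0\omega_1\cdots$), $S$ the left shift, $\preceq$ the lexicographic order with intervals $[\alpha,\beta]=\{\omega:\alpha\preceq\omega\preceq\beta\}$ and half-open analogues. $(\alpha,\beta)$ is admissible if $\alpha_0=0,\alpha_1=1,\beta_0=1,\beta_1=0$ and $S^n\alpha\notin(\alpha,\beta]$, $S^n\beta\notin[\alpha,\beta)$ for all $n\ge0$. $\Omega_{(\alpha,\beta,-)}=\{\omega:S^n\omega\notin(\alpha,\beta]\ \forall n\ge0\}$, $\Omega_{(\alpha,\beta,+)}=\{\omega:S^n\omega\notin[\alpha,\beta)\ \forall n\ge0\}$, $\Omega_{(\alpha,\beta)}$ their union. With $\Gamma_n=\{\omega_0\cdots\omega_n:\omega\in\Gamma\}$ and $h(\Gamma)=\limsup_n\frac1n\ln|\Gamma_n|$, the admissible pair is non-null if $h(\Omega_{(\alpha,\beta)})>0$. Projection: $\pi_x(\omega)=(1-x)\sum_{k\ge0}\omega_kx^k$ for $x\in[0,1)$. *)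

theory Defs
  imports "HOL-Analysis.Analysis" "HOL-Library.Liminf_Limsup"
begin

definition Omega :: "(nat \<Rightarrow> nat) set" where
  "Omega = {\<omega>. \<forall>k. \<omega> k \<in> {0, 1}}"

definition shift :: "(nat \<Rightarrow> nat) \<Rightarrow> (nat \<Rightarrow> nat)" where
  "shift \<omega> = (\<lambda>k. \<omega> (Suc k))"

definition lex_less :: "(nat \<Rightarrow> nat) \<Rightarrow> (nat \<Rightarrow> nat) \<Rightarrow> bool" where
  "lex_less \<omega> \<eta> = (\<exists>n. (\<forall>k<n. \<omega> k = \<eta> k) \<and> \<omega> n < \<eta> n)"

definition lex_le :: "(nat \<Rightarrow> nat) \<Rightarrow> (nat \<Rightarrow> nat) \<Rightarrow> bool" where
  "lex_le \<omega> \<eta> = (lex_less \<omega> \<eta> \<or> \<omega> = \<eta>)"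

definition admissible :: "(nat \<Rightarrow> nat) \<Rightarrow> (nat \<Rightarrow> nat) \<Rightarrow> bool" where
  "admissible \<alpha> \<beta> =
     (\<alpha> \<in> Omega \<and> \<beta> \<in> Omega \<and>
      \<alpha> 0 = 0 \<and> \<alpha> 1 = 1 \<and> \<beta> 0 = 1 \<and> \<beta> 1 = 0 \<and>
      (\<forall>n. \<not> (lex_less \<alpha> ((shift ^^ n) \<alpha>) \<and> lex_le ((shift ^^ n) \<alpha>) \<beta>)) \<and>
      (\<forall>n. \<not> (lex_le \<alpha> ((shift ^^ n) \<beta>) \<and> lex_less ((shift ^^ n) \<beta>) \<beta>)))"

definition Omega_minus :: "(nat \<Rightarrow> nat) \<Rightarrow> (nat \<Rightarrow> nat) \<Rightarrow> (nat \<Rightarrow> nat) set" where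
  "Omega_minus \<alpha> \<beta> = {\<omega> \<in> Omega. \<forall>n.
      \<not> (lex_less \<alpha> ((shift ^^ n) \<omega>) \<and> lex_le ((shift ^^ n) \<omega>) \<beta>)}"

definition Omega_plus :: "(nat \<Rightarrow> nat) \<Rightarrow> (nat \<Rightarrow> nat) \<Rightarrow> (nat \<Rightarrow> nat) set" where
  "Omega_plus \<alpha> \<beta> = {\<omega> \<in> Omega. \<forall>n.
      \<not> (lex_le \<alpha> ((shift ^^ n) \<omega>) \<and> lex_less ((shift ^^ n) \<omega>) \<beta>)}"

definition Omega_ab :: "(nat \<Rightarrow> nat) \<Rightarrow> (nat \<Rightarrow> nat) \<Rightarrow> (nat \<Rightarrow> nat) set" where
  "Omega_ab \<alpha> \<beta> = Omega_minus \<alpha> \<beta> \<union> Omega_plus \<alpha> \<beta>"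

definition prefixes :: "(nat \<Rightarrow> nat) set \<Rightarrow> nat \<Rightarrow> nat list set" where
  "prefixes \<Gamma> n = (\<lambda>\<omega>. map \<omega> [0..<Suc n]) ` \<Gamma>"

definition entropy :: "(nat \<Rightarrow> nat) set \<Rightarrow> ereal" where
  "entropy \<Gamma> = limsup (\<lambda>n. ereal (ln (real (card (prefixes \<Gamma> n))) / real n))"

definition non_null :: "(nat \<Rightarrow> nat) \<Rightarrow> (nat \<Rightarrow> nat) \<Rightarrow> bool" where
  "non_null \<alpha> \<beta> = (entropy (Omega_ab \<alpha> \<beta>) > 0)"

definition proj :: "real \<Rightarrow> (nat \<Rightarrow> nat) \<Rightarrow> real" where
  "proj x \<omega> = (1 - x) * (\<Sum>k. real (\<omega> k) * x ^ k)"

end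

theory Submission
  imports Defs
begin

text \<open>Suppose \<open>\<pi>\<^sub>x(\<alpha>) \<noteq> \<pi>\<^sub>x(\<beta>)\<close> for all \<open>x \<in> (0,1)\<close>, and let \<open>Y = Omega_open \<alpha> \<beta>\<close> be the set of
  sequences whose orbit avoids the open lexicographic interval \<open>(\<alpha>,\<beta>)\<close>; it is shift-invariant
  and contains \<open>\<Omega>(\<alpha>,\<beta>)\<close>, \<open>\<alpha>\<close> and \<open>\<beta>\<close>. For \<open>x \<le> 1/2\<close> every \<open>\<pi>\<^sub>x\<close> is lexicographically
  monotone. If \<open>\<pi>\<^sub>x\<close> is monotone on \<open>Y\<close>, then where two sequences of \<open>Y\<close> first differ, the tail
  beginning with \<open>1\<close> lies above \<open>\<beta>\<close> and the one beginning with \<open>0\<close> below \<open>\<alpha>\<close>, so their projections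
  differ by at least \<open>x\<^sup>n (\<pi>\<^sub>x(\<beta>) - \<pi>\<^sub>x(\<alpha>)) > 0\<close>. This gap and the equicontinuity of
  \<open>x \<mapsto> \<pi>\<^sub>x\<close> make the set of \<open>x \<in> (0,1)\<close> where \<open>\<pi>\<^sub>x\<close> is monotone on \<open>Y\<close> open; its complement is
  open as well, so it is all of \<open>(0,1)\<close>. The gap then separates the prefixes of length \<open>n + 1\<close>
  of \<open>Y\<close>, so there are \<open>O(x\<^sup>-\<^sup>n)\<close> of them and \<open>h(\<Omega>(\<alpha>,\<beta>)) \<le> -ln x\<close> for every \<open>x < 1\<close>,
  contradicting non-nullness.\<close>

lemma shift_pow_apply: "(shift ^^ n) \<omega> k = \<omega> (k + n)"
  by (induction n arbitrary: k) (auto simp: shift_def)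

lemma Omega_shift_pow: "\<omega> \<in> Omega \<Longrightarrow> (shift ^^ n) \<omega> \<in> Omega"
  by (simp add: Omega_def shift_pow_apply)

lemma Omega_le_1:
  assumes "\<zeta> \<in> Omega"
  shows "real (\<zeta> k) \<le> 1"
proof -
  from assms have "\<zeta> k = 0 \<or> \<zeta> k = 1" unfolding Omega_def by auto
  then show ?thesis by auto
qed

lemma lex_less_linear:
  assumes "\<omega> \<noteq> \<eta>"
  shows "lex_less \<omega> \<eta> \<or> lex_less \<eta> \<omega>"
proof -
  have ex: "\<exists>k. \<omega> k \<noteq> \<eta> k" using assms by auto
  define m where "m = (LEAST k. \<omega> k \<noteq> \<eta> k)"
  have "\<omega> m \<noteq> \<eta> m" unfolding m_def using LeastI_ex[OF ex] .
  moreover have "\<forall>k<m. \<omega> k = \<eta> k" unfolding m_def using not_less_Least by blast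
  ultimately show ?thesis unfolding lex_less_def by (metis linorder_neqE_nat)
qed

lemma not_lex_less: "\<not> lex_less a b \<Longrightarrow> lex_le b a"
  using lex_less_linear unfolding lex_le_def by blast

lemma lex_lessI_head: "a 0 < b 0 \<Longrightarrow> lex_less a b"
  unfolding lex_less_def by (rule exI[of _ 0]) simp

lemma lex_less_Omega_first_difference:
  assumes "\<omega> \<in> Omega" "\<eta> \<in> Omega" "lex_less \<omega> \<eta>"
  obtains n where "\<forall>k<n. \<omega> k = \<eta> k" "\<omega> n = 0" "\<eta> n = 1"
proof -
  obtain n where n: "\<forall>k<n. \<omega> k = \<eta> k" "\<omega> n < \<eta> n"
    using assms(3) unfolding lex_less_def by blast
  have "\<omega> n \<in> {0,1}" "\<eta> n \<in> {0,1}" using assms unfolding Omega_def by auto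
  with n that show ?thesis by auto
qed

definition Omega_open :: "(nat \<Rightarrow> nat) \<Rightarrow> (nat \<Rightarrow> nat) \<Rightarrow> (nat \<Rightarrow> nat) set" where
  "Omega_open \<alpha> \<beta> = {\<omega> \<in> Omega. \<forall>n.
      \<not> (lex_less \<alpha> ((shift ^^ n) \<omega>) \<and> lex_less ((shift ^^ n) \<omega>) \<beta>)}"

lemma Omega_open_subset_Omega: "Omega_open \<alpha> \<beta> \<subseteq> Omega"
  unfolding Omega_open_def by auto

lemma Omega_open_shift_pow: "\<omega> \<in> Omega_open \<alpha> \<beta> \<Longrightarrow> (shift ^^ n) \<omega> \<in> Omega_open \<alpha> \<beta>"
proof -
  have "(shift ^^ m) ((shift ^^ n) \<omega>) = (shift ^^ (m + n)) \<omega>" for m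
    by (simp add: funpow_add)
  then show "\<omega> \<in> Omega_open \<alpha> \<beta> \<Longrightarrow> (shift ^^ n) \<omega> \<in> Omega_open \<alpha> \<beta>"
    unfolding Omega_open_def using Omega_shift_pow by auto
qed

lemma Omega_ab_subset_Omega_open: "Omega_ab \<alpha> \<beta> \<subseteq> Omega_open \<alpha> \<beta>"
  unfolding Omega_ab_def Omega_minus_def Omega_plus_def Omega_open_def lex_le_def by blast

lemma admissible_Omega_open:
  assumes "admissible \<alpha> \<beta>"
  shows "\<alpha> \<in> Omega_open \<alpha> \<beta>" "\<beta> \<in> Omega_open \<alpha> \<beta>"
  using assms unfolding admissible_def Omega_open_def lex_le_def by blast+

lemma Omega_open_tail_0:
  assumes "\<omega> \<in> Omega_open \<alpha> \<beta>" "\<beta> 0 = 1" "\<omega> n = 0"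
  shows "lex_le ((shift ^^ n) \<omega>) \<alpha>"
proof -
  have "lex_less ((shift ^^ n) \<omega>) \<beta>"
    using assms(2,3) by (intro lex_lessI_head) (simp add: shift_pow_apply)
  then show ?thesis using assms(1) not_lex_less unfolding Omega_open_def by blast
qed

lemma Omega_open_tail_1:
  assumes "\<omega> \<in> Omega_open \<alpha> \<beta>" "\<alpha> 0 = 0" "\<omega> n = 1"
  shows "lex_le \<beta> ((shift ^^ n) \<omega>)"
proof -
  have "lex_less \<alpha> ((shift ^^ n) \<omega>)"
    using assms(2,3) by (intro lex_lessI_head) (simp add: shift_pow_apply)
  then show ?thesis using assms(1) not_lex_less unfolding Omega_open_def by blast
qed

lemma summable_Omega_powser:
  assumes "\<zeta> \<in> Omega" "0 \<le> x" "x < 1"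
  shows "summable (\<lambda>k. real (\<zeta> k) * x ^ k)"
proof (rule summable_comparison_test[where g="\<lambda>k. x ^ k"])
  show "\<exists>N. \<forall>n\<ge>N. norm (real (\<zeta> n) * x ^ n) \<le> x ^ n"
    using Omega_le_1[OF assms(1)] assms(2) by (auto intro!: mult_left_le_one_le)
  show "summable (\<lambda>k. x ^ k)" using assms by (intro summable_geometric) simp
qed

lemma Omega_powser_bounds:
  assumes "\<zeta> \<in> Omega" "0 \<le> x" "x < 1"
  shows "0 \<le> (\<Sum>k. real (\<zeta> k) * x ^ k)" "(\<Sum>k. real (\<zeta> k) * x ^ k) \<le> 1 / (1 - x)"
proof -
  show "0 \<le> (\<Sum>k. real (\<zeta> k) * x ^ k)"
    using summable_Omega_powser[OF assms] assms by (intro suminf_nonneg) auto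
  have "(\<Sum>k. real (\<zeta> k) * x ^ k) \<le> (\<Sum>k. x ^ k)"
    using summable_Omega_powser[OF assms] assms Omega_le_1[OF assms(1)]
    by (intro suminf_le) (auto intro!: mult_left_le_one_le summable_geometric)
  also have "\<dots> = 1 / (1 - x)" using assms by (intro suminf_geometric) simp
  finally show "(\<Sum>k. real (\<zeta> k) * x ^ k) \<le> 1 / (1 - x)" .
qed

lemma proj_bounds:
  assumes "\<zeta> \<in> Omega" "0 \<le> x" "x < 1"
  shows "0 \<le> proj x \<zeta>" "proj x \<zeta> \<le> 1"
proof -
  note F = Omega_powser_bounds[OF assms]
  show "0 \<le> proj x \<zeta>" unfolding proj_def using F assms by simp
  have "proj x \<zeta> \<le> (1 - x) * (1 / (1 - x))" unfolding proj_def
    using F assms by (intro mult_left_mono) auto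
  then show "proj x \<zeta> \<le> 1" using assms by simp
qed

lemma proj_shift_pow:
  assumes "\<zeta> \<in> Omega" "0 \<le> x" "x < 1"
  shows "proj x \<zeta> = (1 - x) * (\<Sum>k<n. real (\<zeta> k) * x ^ k) + x ^ n * proj x ((shift ^^ n) \<zeta>)"
proof -
  have s: "summable (\<lambda>k. real (\<zeta> k) * x ^ k)" using summable_Omega_powser[OF assms] .
  have s_tail: "summable (\<lambda>k. real (\<zeta> (k + n)) * x ^ k)"
    using summable_Omega_powser[OF Omega_shift_pow[OF assms(1)] assms(2,3), of n]
    by (simp add: shift_pow_apply)
  have "(\<Sum>k. real (\<zeta> k) * x ^ k)
      = (\<Sum>k. real (\<zeta> (k + n)) * x ^ (k + n)) + (\<Sum>k<n. real (\<zeta> k) * x ^ k)"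
    using suminf_split_initial_segment[OF s, of n] by simp
  also have "(\<Sum>k. real (\<zeta> (k + n)) * x ^ (k + n)) = (\<Sum>k. x ^ n * (real (\<zeta> (k + n)) * x ^ k))"
    by (simp add: power_add mult_ac)
  also have "\<dots> = x ^ n * (\<Sum>k. real (\<zeta> (k + n)) * x ^ k)"
    using s_tail by (rule suminf_mult)
  finally show ?thesis unfolding proj_def by (simp add: shift_pow_apply algebra_simps)
qed

lemma proj_diff_common_prefix:
  assumes "\<omega> \<in> Omega" "\<eta> \<in> Omega" "0 \<le> x" "x < 1" "\<forall>k<n. \<omega> k = \<eta> k"
  shows "proj x \<eta> - proj x \<omega> = x ^ n * (proj x ((shift ^^ n) \<eta>) - proj x ((shift ^^ n) \<omega>))"
proof -
  have "(\<Sum>k<n. real (\<omega> k) * x ^ k) = (\<Sum>k<n. real (\<eta> k) * x ^ k)"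
    using assms(5) by (intro sum.cong) auto
  then show ?thesis
    using proj_shift_pow[OF assms(1,3,4), of n] proj_shift_pow[OF assms(2,3,4), of n]
    by (simp add: algebra_simps)
qed

lemma proj_mono_lex_le_half:
  assumes "\<omega> \<in> Omega" "\<eta> \<in> Omega" "lex_less \<omega> \<eta>" "0 \<le> x" "x \<le> 1/2"
  shows "proj x \<omega> \<le> proj x \<eta>"
proof -
  obtain n where n: "\<forall>k<n. \<omega> k = \<eta> k" "\<omega> n = 0" "\<eta> n = 1"
    using lex_less_Omega_first_difference[OF assms(1-3)] .
  define \<omega>' \<eta>' where "\<omega>' = (shift ^^ n) \<omega>" and "\<eta>' = (shift ^^ n) \<eta>"
  have \<omega>': "\<omega>' \<in> Omega" "shift \<omega>' \<in> Omega" "\<omega>' 0 = 0"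
    unfolding \<omega>'_def using Omega_shift_pow[OF assms(1)] Omega_shift_pow[of _ 1] n
    by (auto simp: shift_pow_apply)
  have \<eta>': "\<eta>' \<in> Omega" "shift \<eta>' \<in> Omega" "\<eta>' 0 = 1"
    unfolding \<eta>'_def using Omega_shift_pow[OF assms(2)] Omega_shift_pow[of _ 1] n
    by (auto simp: shift_pow_apply)
  have x1: "x < 1" using assms by simp
  \<comment> \<open>The leading digits contribute \<open>1 - x\<close>, the remaining tails at most \<open>x\<close>.\<close>
  have "proj x \<eta>' - proj x \<omega>' = (1 - x) + x * (proj x (shift \<eta>') - proj x (shift \<omega>'))"
    using proj_shift_pow[OF \<eta>'(1) assms(4) x1, of 1] proj_shift_pow[OF \<omega>'(1) assms(4) x1, of 1]
      \<omega>'(3) \<eta>'(3) by (simp add: algebra_simps)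
  also have "\<dots> \<ge> (1 - x) + x * (0 - 1)"
    using proj_bounds[OF \<eta>'(2) assms(4) x1] proj_bounds[OF \<omega>'(2) assms(4) x1] assms(4)
    by (intro add_left_mono mult_left_mono) auto
  finally have "0 \<le> x ^ n * (proj x \<eta>' - proj x \<omega>')" using assms(4,5) by simp
  then show ?thesis
    using proj_diff_common_prefix[OF assms(1,2,4) x1 n(1)] unfolding \<omega>'_def \<eta>'_def by simp
qed

lemma Omega_powser_increment_bounds:
  assumes "\<zeta> \<in> Omega" "0 \<le> x" "x \<le> y" "y < 1"
  shows "0 \<le> (\<Sum>k. real (\<zeta> k) * y ^ k) - (\<Sum>k. real (\<zeta> k) * x ^ k)"
    and "(\<Sum>k. real (\<zeta> k) * y ^ k) - (\<Sum>k. real (\<zeta> k) * x ^ k) \<le> 1 / (1 - y) - 1 / (1 - x)"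
proof -
  have sy: "summable (\<lambda>k. real (\<zeta> k) * y ^ k)" and sx: "summable (\<lambda>k. real (\<zeta> k) * x ^ k)"
    using summable_Omega_powser assms by auto
  have gy: "summable (\<lambda>k. y ^ k)" and gx: "summable (\<lambda>k. x ^ k)"
    using assms by (auto intro!: summable_geometric)
  have eq: "(\<Sum>k. real (\<zeta> k) * y ^ k) - (\<Sum>k. real (\<zeta> k) * x ^ k)
      = (\<Sum>k. real (\<zeta> k) * (y ^ k - x ^ k))"
    using suminf_diff[OF sy sx] by (simp add: algebra_simps)
  have sd: "summable (\<lambda>k. real (\<zeta> k) * (y ^ k - x ^ k))"
    using summable_diff[OF sy sx] by (simp add: algebra_simps)
  have mono: "x ^ k \<le> y ^ k" for k using assms by (intro power_mono) auto
  show "0 \<le> (\<Sum>k. real (\<zeta> k) * y ^ k) - (\<Sum>k. real (\<zeta> k) * x ^ k)"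
    unfolding eq using sd mono by (intro suminf_nonneg) auto
  have "(\<Sum>k. real (\<zeta> k) * (y ^ k - x ^ k)) \<le> (\<Sum>k. y ^ k - x ^ k)"
    using sd summable_diff[OF gy gx] mono Omega_le_1[OF assms(1)]
    by (intro suminf_le) (auto intro!: mult_left_le_one_le)
  also have "\<dots> = 1 / (1 - y) - 1 / (1 - x)"
    using suminf_diff[OF gy gx] assms by (simp add: suminf_geometric)
  finally show "(\<Sum>k. real (\<zeta> k) * y ^ k) - (\<Sum>k. real (\<zeta> k) * x ^ k) \<le> 1 / (1 - y) - 1 / (1 - x)"
    unfolding eq .
qed

lemma proj_increment_le:
  assumes "\<zeta> \<in> Omega" "0 \<le> x" "x \<le> y" "y < 1"
  shows "\<bar>proj y \<zeta> - proj x \<zeta>\<bar> \<le> 2 * (y - x) / (1 - y)"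
proof -
  define Fy Fx where "Fy = (\<Sum>k. real (\<zeta> k) * y ^ k)" and "Fx = (\<Sum>k. real (\<zeta> k) * x ^ k)"
  have l: "0 \<le> Fy - Fx" "Fy - Fx \<le> 1 / (1 - y) - 1 / (1 - x)"
    using Omega_powser_increment_bounds[OF assms] unfolding Fy_def Fx_def by auto
  have b: "0 \<le> Fx" "Fx \<le> 1 / (1 - x)"
    using Omega_powser_bounds[OF assms(1,2)] assms unfolding Fx_def by auto
  have eq: "proj y \<zeta> - proj x \<zeta> = (1 - y) * (Fy - Fx) - (y - x) * Fx"
    unfolding proj_def Fy_def Fx_def by (simp add: algebra_simps)
  have "(1 - y) * (Fy - Fx) \<le> (1 - y) * (1 / (1 - y) - 1 / (1 - x))"
    using l assms by (intro mult_left_mono) auto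
  also have "\<dots> = (y - x) / (1 - x)" using assms by (simp add: divide_simps)
  finally have t1: "(1 - y) * (Fy - Fx) \<le> (y - x) / (1 - x)" .
  have t2: "(y - x) * Fx \<le> (y - x) / (1 - x)"
    using mult_left_mono[OF b(2), of "y - x"] assms by simp
  have t0: "0 \<le> (1 - y) * (Fy - Fx)" "0 \<le> (y - x) * Fx" using l b assms by auto
  have "(y - x) / (1 - x) \<le> (y - x) / (1 - y)"
    using assms by (intro divide_left_mono) auto
  moreover have "2 * (y - x) / (1 - y) = 2 * ((y - x) / (1 - y))" by simp
  ultimately show ?thesis
    unfolding eq abs_le_iff using t0 t1 t2 by linarith
qed

lemma proj_equicontinuous:
  assumes "0 \<le> x" "x < 1" "0 < d"
  obtains e where "0 < e"
    "\<And>y \<zeta>. 0 \<le> y \<Longrightarrow> \<bar>y - x\<bar> < e \<Longrightarrow> \<zeta> \<in> Omega \<Longrightarrow> \<bar>proj y \<zeta> - proj x \<zeta>\<bar> < d"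
proof
  define e where "e = min ((1 - x) / 2) (d * (1 - x) / 4)"
  show "0 < e" unfolding e_def using assms by simp
  fix y \<zeta> assume y: "0 \<le> y" "\<bar>y - x\<bar> < e" and \<zeta>: "\<zeta> \<in> Omega"
  have "\<bar>proj y \<zeta> - proj x \<zeta>\<bar> \<le> 2 * \<bar>y - x\<bar> / ((1 - x) / 2)"
  proof (cases "x \<le> y")
    case True
    then have "1 - y \<ge> (1 - x) / 2" using y unfolding e_def by simp
    moreover have "y < 1" using True y unfolding e_def by simp
    ultimately have "2 * (y - x) / (1 - y) \<le> 2 * (y - x) / ((1 - x) / 2)"
      using True assms by (intro divide_left_mono) auto
    then show ?thesis using proj_increment_le[OF \<zeta> assms(1) True \<open>y < 1\<close>] True by simp
  next
    case False
    have "2 * (x - y) / (1 - x) \<le> 2 * (x - y) / ((1 - x) / 2)"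
      using False assms by (intro divide_left_mono) auto
    then show ?thesis
      using proj_increment_le[OF \<zeta> y(1) _ assms(2)] False by (simp add: abs_minus_commute)
  qed
  also have "\<dots> = 4 * \<bar>y - x\<bar> / (1 - x)" by simp
  also have "\<dots> < 4 * (d * (1 - x) / 4) / (1 - x)"
    using y(2) assms unfolding e_def by (intro divide_strict_right_mono) auto
  also have "\<dots> = d" using assms by simp
  finally show "\<bar>proj y \<zeta> - proj x \<zeta>\<bar> < d" .
qed

definition proj_lex_mono :: "(nat \<Rightarrow> nat) \<Rightarrow> (nat \<Rightarrow> nat) \<Rightarrow> real \<Rightarrow> bool" where
  "proj_lex_mono \<alpha> \<beta> x \<longleftrightarrow>
     (\<forall>\<omega>\<in>Omega_open \<alpha> \<beta>. \<forall>\<eta>\<in>Omega_open \<alpha> \<beta>. lex_less \<omega> \<eta> \<longrightarrow> proj x \<omega> \<le> proj x \<eta>)"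

lemma proj_lex_mono_le_half: "0 \<le> x \<Longrightarrow> x \<le> 1/2 \<Longrightarrow> proj_lex_mono \<alpha> \<beta> x"
  unfolding proj_lex_mono_def using proj_mono_lex_le_half Omega_open_subset_Omega by blast

lemma proj_lex_mono_le:
  "proj_lex_mono \<alpha> \<beta> x \<Longrightarrow> \<omega> \<in> Omega_open \<alpha> \<beta> \<Longrightarrow> \<eta> \<in> Omega_open \<alpha> \<beta> \<Longrightarrow> lex_le \<omega> \<eta>
    \<Longrightarrow> proj x \<omega> \<le> proj x \<eta>"
  unfolding proj_lex_mono_def lex_le_def by auto

lemma proj_lex_mono_alpha_le_beta:
  "admissible \<alpha> \<beta> \<Longrightarrow> proj_lex_mono \<alpha> \<beta> x \<Longrightarrow> proj x \<alpha> \<le> proj x \<beta>"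
  using admissible_Omega_open lex_lessI_head[of \<alpha> \<beta>] unfolding admissible_def proj_lex_mono_def
  by auto

lemma proj_tail_gap:
  assumes "admissible \<alpha> \<beta>" "proj_lex_mono \<alpha> \<beta> x" "\<omega> \<in> Omega_open \<alpha> \<beta>" "\<eta> \<in> Omega_open \<alpha> \<beta>"
    "\<omega> n = 0" "\<eta> n = 1"
  shows "proj x \<beta> - proj x \<alpha> \<le> proj x ((shift ^^ n) \<eta>) - proj x ((shift ^^ n) \<omega>)"
proof -
  have \<alpha>\<beta>: "\<alpha> 0 = 0" "\<beta> 0 = 1" using assms(1) unfolding admissible_def by auto
  note mono = proj_lex_mono_le[OF assms(2)]
  have "proj x ((shift ^^ n) \<omega>) \<le> proj x \<alpha>"
    using mono[OF Omega_open_shift_pow[OF assms(3)] admissible_Omega_open(1)[OF assms(1)]]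
      Omega_open_tail_0[OF assms(3) \<alpha>\<beta>(2) assms(5)] .
  moreover have "proj x \<beta> \<le> proj x ((shift ^^ n) \<eta>)"
    using mono[OF admissible_Omega_open(2)[OF assms(1)] Omega_open_shift_pow[OF assms(4)]]
      Omega_open_tail_1[OF assms(4) \<alpha>\<beta>(1) assms(6)] .
  ultimately show ?thesis by simp
qed

lemma proj_lex_mono_nearby:
  assumes adm: "admissible \<alpha> \<beta>" and mono: "proj_lex_mono \<alpha> \<beta> x" and x: "0 \<le> x" "x < 1"
    and less: "proj x \<alpha> < proj x \<beta>"
  obtains e where "0 < e" "\<And>y. 0 < y \<Longrightarrow> y < 1 \<Longrightarrow> \<bar>y - x\<bar> < e \<Longrightarrow> proj_lex_mono \<alpha> \<beta> y"
proof -
  define d where "d = proj x \<beta> - proj x \<alpha>"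
  have "0 < d" using less unfolding d_def by simp
  then obtain e where e: "0 < e"
    "\<And>y \<zeta>. 0 \<le> y \<Longrightarrow> \<bar>y - x\<bar> < e \<Longrightarrow> \<zeta> \<in> Omega \<Longrightarrow> \<bar>proj y \<zeta> - proj x \<zeta>\<bar> < d / 2"
    using proj_equicontinuous[of x "d / 2"] x by auto
  have "proj_lex_mono \<alpha> \<beta> y" if y: "0 < y" "y < 1" "\<bar>y - x\<bar> < e" for y
    unfolding proj_lex_mono_def
  proof (intro ballI impI)
    fix \<omega> \<eta> assume \<omega>: "\<omega> \<in> Omega_open \<alpha> \<beta>" and \<eta>: "\<eta> \<in> Omega_open \<alpha> \<beta>" and "lex_less \<omega> \<eta>"
    have \<omega>\<eta>: "\<omega> \<in> Omega" "\<eta> \<in> Omega" using \<omega> \<eta> Omega_open_subset_Omega by blast+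
    obtain n where n: "\<forall>k<n. \<omega> k = \<eta> k" "\<omega> n = 0" "\<eta> n = 1"
      using lex_less_Omega_first_difference[OF \<omega>\<eta> \<open>lex_less \<omega> \<eta>\<close>] .
    define \<omega>' \<eta>' where "\<omega>' = (shift ^^ n) \<omega>" and "\<eta>' = (shift ^^ n) \<eta>"
    have "\<omega>' \<in> Omega" "\<eta>' \<in> Omega"
      unfolding \<omega>'_def \<eta>'_def using \<omega>\<eta> Omega_shift_pow by blast+
    then have "\<bar>proj y \<omega>' - proj x \<omega>'\<bar> < d / 2" "\<bar>proj y \<eta>' - proj x \<eta>'\<bar> < d / 2"
      using e(2) y by auto
    moreover have "d \<le> proj x \<eta>' - proj x \<omega>'"
      unfolding d_def \<omega>'_def \<eta>'_def using proj_tail_gap[OF adm mono \<omega> \<eta> n(2,3)] .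
    ultimately have "0 \<le> proj y \<eta>' - proj y \<omega>'" unfolding abs_less_iff by linarith
    then have "0 \<le> y ^ n * (proj y \<eta>' - proj y \<omega>')" using y by simp
    then show "proj y \<omega> \<le> proj y \<eta>"
      using proj_diff_common_prefix[OF \<omega>\<eta> _ _ n(1), of y] y unfolding \<omega>'_def \<eta>'_def by simp
  qed
  with e(1) that show ?thesis by blast
qed

lemma not_proj_lex_mono_nearby:
  assumes nonmono: "\<not> proj_lex_mono \<alpha> \<beta> x" and x: "0 \<le> x" "x < 1"
  obtains e where "0 < e" "\<And>y. 0 \<le> y \<Longrightarrow> \<bar>y - x\<bar> < e \<Longrightarrow> \<not> proj_lex_mono \<alpha> \<beta> y"
proof -
  obtain \<omega> \<eta> where \<omega>: "\<omega> \<in> Omega_open \<alpha> \<beta>" and \<eta>: "\<eta> \<in> Omega_open \<alpha> \<beta>"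
    and "lex_less \<omega> \<eta>" and gt: "proj x \<eta> < proj x \<omega>"
    using nonmono unfolding proj_lex_mono_def by (auto simp: not_le)
  then have witness: "\<not> proj_lex_mono \<alpha> \<beta> y" if "proj y \<eta> < proj y \<omega>" for y
    using that unfolding proj_lex_mono_def by force
  have \<omega>\<eta>: "\<omega> \<in> Omega" "\<eta> \<in> Omega" using \<omega> \<eta> Omega_open_subset_Omega by blast+
  define d where "d = proj x \<omega> - proj x \<eta>"
  have "0 < d" using gt unfolding d_def by simp
  then obtain e where e: "0 < e"
    "\<And>y \<zeta>. 0 \<le> y \<Longrightarrow> \<bar>y - x\<bar> < e \<Longrightarrow> \<zeta> \<in> Omega \<Longrightarrow> \<bar>proj y \<zeta> - proj x \<zeta>\<bar> < d / 2"
    using proj_equicontinuous[of x "d / 2"] x by auto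
  have "\<not> proj_lex_mono \<alpha> \<beta> y" if y: "0 \<le> y" "\<bar>y - x\<bar> < e" for y
  proof (rule witness)
    have "\<bar>proj y \<omega> - proj x \<omega>\<bar> < d / 2" "\<bar>proj y \<eta> - proj x \<eta>\<bar> < d / 2"
      using e(2) y \<omega>\<eta> by auto
    then show "proj y \<eta> < proj y \<omega>" using d_def by linarith
  qed
  with e(1) that show ?thesis by blast
qed

lemma proj_lex_mono_locally_constant:
  assumes adm: "admissible \<alpha> \<beta>" and x: "0 < x" "x < 1" and ne: "proj x \<alpha> \<noteq> proj x \<beta>"
  obtains e where "0 < e"
    "\<And>y. 0 < y \<Longrightarrow> y < 1 \<Longrightarrow> \<bar>y - x\<bar> < e \<Longrightarrow> proj_lex_mono \<alpha> \<beta> y \<longleftrightarrow> proj_lex_mono \<alpha> \<beta> x"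
proof (cases "proj_lex_mono \<alpha> \<beta> x")
  case True
  then have "proj x \<alpha> < proj x \<beta>" using proj_lex_mono_alpha_le_beta[OF adm] ne by fastforce
  with True x obtain e where "0 < e" "\<And>y. 0 < y \<Longrightarrow> y < 1 \<Longrightarrow> \<bar>y - x\<bar> < e \<Longrightarrow> proj_lex_mono \<alpha> \<beta> y"
    using proj_lex_mono_nearby[OF adm] by (metis less_imp_le)
  with True that show ?thesis by blast
next
  case False
  with x obtain e where "0 < e" "\<And>y. 0 \<le> y \<Longrightarrow> \<bar>y - x\<bar> < e \<Longrightarrow> \<not> proj_lex_mono \<alpha> \<beta> y"
    using not_proj_lex_mono_nearby by (metis less_imp_le)
  with False that show ?thesis by (meson less_imp_le)
qed

lemma proj_lex_mono_everywhere:
  assumes adm: "admissible \<alpha> \<beta>" and ne: "\<And>x. 0 < x \<Longrightarrow> x < 1 \<Longrightarrow> proj x \<alpha> \<noteq> proj x \<beta>"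
    and x: "0 < x" "x < 1"
  shows "proj_lex_mono \<alpha> \<beta> x"
proof (rule connected_induction_simple[where P = "proj_lex_mono \<alpha> \<beta>"])
  show "connected {0<..<1::real}" by simp
  show "1/2 \<in> {0<..<1::real}" "x \<in> {0<..<1}" using x by auto
  show "proj_lex_mono \<alpha> \<beta> (1/2)" by (rule proj_lex_mono_le_half) auto
  fix a :: real assume "a \<in> {0<..<1}"
  then obtain e where "0 < e"
    and e: "\<And>y. 0 < y \<Longrightarrow> y < 1 \<Longrightarrow> \<bar>y - a\<bar> < e \<Longrightarrow> proj_lex_mono \<alpha> \<beta> y \<longleftrightarrow> proj_lex_mono \<alpha> \<beta> a"
    using proj_lex_mono_locally_constant[OF adm] ne by (metis greaterThanLessThan_iff)
  show "\<exists>T. openin (top_of_set {0<..<1}) T \<and> a \<in> T \<and>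
      (\<forall>y\<in>T. \<forall>z\<in>T. proj_lex_mono \<alpha> \<beta> y \<longrightarrow> proj_lex_mono \<alpha> \<beta> z)"
  proof (intro exI conjI)
    show "openin (top_of_set {0<..<1}) ({0<..<1} \<inter> ball a e)" by auto
    show "a \<in> {0<..<1} \<inter> ball a e" using \<open>0 < e\<close> \<open>a \<in> {0<..<1}\<close> by auto
    show "\<forall>y\<in>{0<..<1} \<inter> ball a e. \<forall>z\<in>{0<..<1} \<inter> ball a e.
        proj_lex_mono \<alpha> \<beta> y \<longrightarrow> proj_lex_mono \<alpha> \<beta> z"
      using e by (auto simp: dist_real_def abs_minus_commute)
  qed
qed

lemma proj_separates_prefixes:
  assumes adm: "admissible \<alpha> \<beta>" and mono: "proj_lex_mono \<alpha> \<beta> x" and x: "0 < x" "x < 1"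
    and \<omega>: "\<omega> \<in> Omega_open \<alpha> \<beta>" and \<eta>: "\<eta> \<in> Omega_open \<alpha> \<beta>"
    and k: "k \<le> n" "\<omega> k \<noteq> \<eta> k"
  shows "x ^ n * (proj x \<beta> - proj x \<alpha>) \<le> \<bar>proj x \<eta> - proj x \<omega>\<bar>"
proof -
  have gap: "x ^ n * (proj x \<beta> - proj x \<alpha>) \<le> proj x b - proj x a"
    if a: "a \<in> Omega_open \<alpha> \<beta>" and b: "b \<in> Omega_open \<alpha> \<beta>"
      and "lex_less a b" and "a k \<noteq> b k" for a b
  proof -
    have ab: "a \<in> Omega" "b \<in> Omega" using a b Omega_open_subset_Omega by blast+
    obtain m where m: "\<forall>j<m. a j = b j" "a m = 0" "b m = 1"
      using lex_less_Omega_first_difference[OF ab \<open>lex_less a b\<close>] .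
    have "m \<le> k" using m(1) \<open>a k \<noteq> b k\<close> by (meson not_le)
    then have "x ^ n \<le> x ^ m" using k(1) x by (intro power_decreasing) auto
    then have "x ^ n * (proj x \<beta> - proj x \<alpha>) \<le> x ^ m * (proj x \<beta> - proj x \<alpha>)"
      using proj_lex_mono_alpha_le_beta[OF adm mono] by (intro mult_right_mono) auto
    also have "\<dots> \<le> x ^ m * (proj x ((shift ^^ m) b) - proj x ((shift ^^ m) a))"
      using proj_tail_gap[OF adm mono a b m(2,3)] x by (intro mult_left_mono) auto
    also have "\<dots> = proj x b - proj x a"
      using proj_diff_common_prefix[OF ab _ _ m(1), of x] x by simp
    finally show ?thesis .
  qed
  have "\<omega> \<noteq> \<eta>" using k(2) by auto
  then consider "lex_less \<omega> \<eta>" | "lex_less \<eta> \<omega>" using lex_less_linear by blast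
  then show ?thesis
  proof cases
    case 1 then show ?thesis using gap[OF \<omega> \<eta> _ k(2)] by simp
  next
    case 2 then show ?thesis using gap[OF \<eta> \<omega>] k(2) by simp
  qed
qed

text \<open>The prefix of \<open>\<omega>\<close> is determined by the integer part of \<open>f \<omega> / e\<close>.\<close>
lemma card_prefixes_le_if_separated:
  fixes f :: "(nat \<Rightarrow> nat) \<Rightarrow> real"
  assumes e: "0 < e" and f: "\<And>\<omega>. \<omega> \<in> \<Gamma> \<Longrightarrow> 0 \<le> f \<omega> \<and> f \<omega> \<le> 1"
    and sep: "\<And>\<omega> \<eta>. \<omega> \<in> \<Gamma> \<Longrightarrow> \<eta> \<in> \<Gamma> \<Longrightarrow> map \<omega> [0..<Suc n] \<noteq> map \<eta> [0..<Suc n]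
      \<Longrightarrow> e \<le> \<bar>f \<eta> - f \<omega>\<bar>"
  shows "finite (prefixes \<Gamma> n)" "real (card (prefixes \<Gamma> n)) \<le> 1 + 1 / e"
proof -
  define p where "p \<omega> = map \<omega> [0..<Suc n]" for \<omega> :: "nat \<Rightarrow> nat"
  define g where "g \<omega> = nat \<lfloor>f \<omega> / e\<rfloor>" for \<omega>
  have same_prefix: "p \<omega> = p \<eta>" if "\<omega> \<in> \<Gamma>" "\<eta> \<in> \<Gamma>" "g \<omega> = g \<eta>" for \<omega> \<eta>
  proof (rule ccontr)
    assume "p \<omega> \<noteq> p \<eta>"
    then have "e \<le> \<bar>f \<eta> - f \<omega>\<bar>" using sep that(1,2) unfolding p_def by blast
    then have "1 \<le> \<bar>f \<eta> / e - f \<omega> / e\<bar>" using e by (simp add: diff_divide_distrib[symmetric])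
    moreover have "0 \<le> f \<omega> / e" "0 \<le> f \<eta> / e" using f that(1,2) e by auto
    ultimately show False using that(3) unfolding g_def by linarith
  qed
  have p_inv: "p (inv_into \<Gamma> g (g \<omega>)) = p \<omega>" if "\<omega> \<in> \<Gamma>" for \<omega>
    using that by (intro same_prefix) (auto simp: inv_into_into f_inv_into_f)
  have "prefixes \<Gamma> n = p ` \<Gamma>" by (simp add: prefixes_def p_def[abs_def])
  also have "\<dots> = (\<lambda>k. p (inv_into \<Gamma> g k)) ` g ` \<Gamma>"
    unfolding image_image using p_inv by (intro image_cong) auto
  finally have "prefixes \<Gamma> n = (\<lambda>k. p (inv_into \<Gamma> g k)) ` g ` \<Gamma>" .
  moreover have "g ` \<Gamma> \<subseteq> {0..nat \<lfloor>1 / e\<rfloor>}"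
    using f e unfolding g_def by (auto intro!: nat_mono floor_mono divide_right_mono)
  ultimately have "finite (prefixes \<Gamma> n)" "card (prefixes \<Gamma> n) \<le> card {0..nat \<lfloor>1 / e\<rfloor>}"
    using finite_subset card_image_le card_mono le_trans by (metis finite_atLeastAtMost finite_imageI)+
  moreover have "real (nat \<lfloor>1 / e\<rfloor>) \<le> 1 / e" using e by simp
  ultimately show "finite (prefixes \<Gamma> n)" "real (card (prefixes \<Gamma> n)) \<le> 1 + 1 / e" by auto
qed

lemma entropy_le_ln:
  assumes "1 \<le> C" "1 \<le> q" and card: "\<And>n. 1 \<le> n \<Longrightarrow> real (card (prefixes \<Gamma> n)) \<le> C * q ^ n"
  shows "entropy \<Gamma> \<le> ereal (ln q)"
proof -
  have bound: "ln (real (card (prefixes \<Gamma> n))) / real n \<le> ln C / real n + ln q" if "1 \<le> n" for n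
  proof -
    have "1 \<le> C * q ^ n" using assms(1) one_le_power[OF assms(2)] mult_mono[of 1 C 1 "q ^ n"] by simp
    then have "ln (real (card (prefixes \<Gamma> n))) \<le> ln (C * q ^ n)"
      using card[OF that] by (cases "card (prefixes \<Gamma> n) = 0") (auto simp: ln_le_cancel_iff)
    also have "\<dots> = ln C + real n * ln q" using assms(1,2) by (simp add: ln_mult ln_realpow)
    finally have "ln (real (card (prefixes \<Gamma> n))) / real n \<le> (ln C + real n * ln q) / real n"
      by (intro divide_right_mono) auto
    also have "\<dots> = ln C / real n + ln q" using that by (simp add: field_simps)
    finally show ?thesis .
  qed
  have "(\<lambda>n. ereal (ln C / real n + ln q)) \<longlonglongrightarrow> ereal (0 + ln q)"
    by (intro tendsto_ereal tendsto_add lim_const_over_n tendsto_const)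
  then have "limsup (\<lambda>n. ereal (ln C / real n + ln q)) = ereal (ln q)"
    by (simp add: lim_imp_Limsup)
  moreover have "entropy \<Gamma> \<le> limsup (\<lambda>n. ereal (ln C / real n + ln q))"
    unfolding entropy_def using bound by (intro Limsup_mono eventually_sequentiallyI[of 1]) auto
  ultimately show ?thesis by simp
qed

lemma entropy_Omega_ab_le:
  assumes adm: "admissible \<alpha> \<beta>" and mono: "proj_lex_mono \<alpha> \<beta> x" and x: "0 < x" "x < 1"
    and less: "proj x \<alpha> < proj x \<beta>"
  shows "entropy (Omega_ab \<alpha> \<beta>) \<le> ereal (ln (1 / x))"
proof (rule entropy_le_ln)
  define d where "d = proj x \<beta> - proj x \<alpha>"
  have d: "0 < d" using less unfolding d_def by simp
  show "1 \<le> 1 + 1 / d" "1 \<le> 1 / x" using d x by auto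
  fix n :: nat
  have bounds: "0 \<le> proj x \<omega> \<and> proj x \<omega> \<le> 1" if "\<omega> \<in> Omega_open \<alpha> \<beta>" for \<omega>
  proof -
    have "\<omega> \<in> Omega" using that Omega_open_subset_Omega by blast
    then show ?thesis using proj_bounds x by simp
  qed
  have sep: "x ^ n * d \<le> \<bar>proj x \<eta> - proj x \<omega>\<bar>"
    if \<omega>\<eta>: "\<omega> \<in> Omega_open \<alpha> \<beta>" "\<eta> \<in> Omega_open \<alpha> \<beta>"
      and ne: "map \<omega> [0..<Suc n] \<noteq> map \<eta> [0..<Suc n]" for \<omega> \<eta>
  proof -
    obtain k where "k \<le> n" "\<omega> k \<noteq> \<eta> k"
      using ne by (auto simp: map_eq_conv less_Suc_eq_le simp del: upt_Suc)
    then show ?thesis unfolding d_def by (rule proj_separates_prefixes[OF adm mono x \<omega>\<eta>])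
  qed
  have "0 < x ^ n * d" using d x by simp
  note card_open =
    card_prefixes_le_if_separated[where \<Gamma> = "Omega_open \<alpha> \<beta>" and f = "proj x", OF this bounds sep]
  have "prefixes (Omega_ab \<alpha> \<beta>) n \<subseteq> prefixes (Omega_open \<alpha> \<beta>) n"
    unfolding prefixes_def using Omega_ab_subset_Omega_open by (rule image_mono)
  then have "real (card (prefixes (Omega_ab \<alpha> \<beta>) n)) \<le> 1 + 1 / (x ^ n * d)"
    using card_mono[OF card_open(1)] card_open(2) by (smt (verit) of_nat_le_iff)
  also have "\<dots> \<le> (1 + 1 / d) * (1 / x) ^ n"
    using d x by (simp add: field_simps power_le_one)
  finally show "real (card (prefixes (Omega_ab \<alpha> \<beta>) n)) \<le> (1 + 1 / d) * (1 / x) ^ n" .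
qed

lemma ereal_nonpos_if_le_ln:
  fixes h :: ereal
  assumes "\<And>q. 1 < q \<Longrightarrow> h \<le> ereal (ln q)"
  shows "h \<le> 0"
proof (rule ereal_le_epsilon2)
  fix \<epsilon> :: real assume "0 < \<epsilon>"
  then show "h \<le> 0 + ereal \<epsilon>" using assms[of "exp \<epsilon>"] by simp
qed

theorem theorem3:
  fixes \<alpha> \<beta> :: "nat \<Rightarrow> nat"
  assumes "admissible \<alpha> \<beta>" and "non_null \<alpha> \<beta>"
  shows "\<exists>x. 0 < x \<and> x < 1 \<and> proj x \<alpha> = proj x \<beta>"
proof (rule ccontr)
  assume "\<not> ?thesis"
  then have ne: "\<And>x. 0 < x \<Longrightarrow> x < 1 \<Longrightarrow> proj x \<alpha> \<noteq> proj x \<beta>" by blast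
  have "entropy (Omega_ab \<alpha> \<beta>) \<le> ereal (ln q)" if "1 < q" for q
  proof -
    define x where "x = 1 / q"
    have x: "0 < x" "x < 1" and q: "q = 1 / x" using that unfolding x_def by auto
    have mono: "proj_lex_mono \<alpha> \<beta> x" using proj_lex_mono_everywhere[OF assms(1) ne x] .
    have "proj x \<alpha> < proj x \<beta>"
      using proj_lex_mono_alpha_le_beta[OF assms(1) mono] ne[OF x] by linarith
    then show ?thesis unfolding q using entropy_Omega_ab_le[OF assms(1) mono x] by blast
  qed
  then have "entropy (Omega_ab \<alpha> \<beta>) \<le> 0" by (rule ereal_nonpos_if_le_ln)
  with \<open>non_null \<alpha> \<beta>\<close> show False unfolding non_null_def by simp
qed

end
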